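(* Let $P$ be a finite poset, $\mathcal{J}\subseteq\mathrm{Hom}(P,\mathbb{N})$ a poset ideal, and $S$ a finite set with $\mathrm{Supp}(\mathcal{J})\subseteq S\subseteq P\times\mathbb{N}$, given the induced partial order from $P\times\mathbb{N}$. Let $R$ be a poset and $\phi:S\to R$ an isotone map with left strict chain fibers. Let $B$ be a basis of the kernel of the $k$-linear map $\bigoplus_{s\in S}k x_s\to\bigoplus_{r\in R}k x_r$, $x_s\mapsto x_{\phi(s)}$, consisting of differences $x_{s}-x_{s'}$ with $\phi(s)=\phi(s')$. Then $B$ is a regular sequence on $k[x_S]/L(P,\mathcal{J})$.
   Context: $\mathbb{N}=\{0,1,2,\dots\}$; $\mathrm{Hom}(P,\mathbb{N})$ is the set of isotone maps $P\to\mathbb{N}$ ordered pointwise; $\mathcal{J}^c$ is the complement of $\mathcal{J}$. The ascent of $\psi$ is $\Lambda\psi=\{(p,i): \psi(q)\le i<\psi(p)\ \forall q<p\}$. A marker for $\mathcal{J}$ is a poset ideal $I\subseteq P$ with an isotone $\alpha:I\to\mathbb{N}$ such that every isotone extension of $\alpha$ to $P$ lies in $\mathcal{J}$; its graph is $\Gamma\alpha=\{(p,\alpha(p)):p\in I\}$. With $k$ a field and $m_T=\prod_{t\in T}x_t$, the co-letterplace ideal $L(P,\mathcal{J})$ is generated by $m_{\Gamma\alpha}$ over markers $\alpha$ of $\mathcal{J}$, and the letterplace ideal $L(\mathcal{J},P)$ by $m_{\Lambda\psi}$, $\psi\in\mathcal{J}^c$. $\mathrm{Supp}(\mathcal{J})$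 is the (finite) set of $(p,i)$ such that $x_{p,i}$ divides some minimal monomial generator of $L(P,\mathcal{J})$ (equivalently of its Alexander dual $L(\mathcal{J},P)$); for $S\supseteq\mathrm{Supp}(\mathcal{J})$ these are regarded as ideals of $k[x_S]$ generated by their minimal generators. $P^{\mathrm{op}}\times\mathbb{N}$ has the product order with $P^{\mathrm{op}}$ the opposite poset. The map $\phi$ has left strict chain fibers if each fiber $\phi^{-1}(r)$ is a chain in $P^{\mathrm{op}}\times\mathbb{N}$ whose elements have pairwise distinct first coordinates. *)

theory Defs
  imports Main HOL.Vector_Spaces "HOL-Library.Poly_Mapping"
begin

type_synonym ('p, 'k) lpoly = "(('p \<times> nat) \<Rightarrow>\<^sub>0 nat) \<Rightarrow>\<^sub>0 'k"

definition var :: "'p \<times> nat \<Rightarrow> ('p, 'k::field) lpoly" where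
  "var s = Poly_Mapping.single (Poly_Mapping.single s 1) 1"

definition sqmon :: "('p \<times> nat) set \<Rightarrow> ('p, 'k::field) lpoly" where
  "sqmon T = Poly_Mapping.single (\<Sum>t\<in>T. Poly_Mapping.single t 1) 1"

definition cscale :: "'k::field \<Rightarrow> ('p, 'k) lpoly \<Rightarrow> ('p, 'k) lpoly" where
  "cscale c f = Poly_Mapping.single 0 c * f"

definition polyring :: "('p \<times> nat) set \<Rightarrow> ('p, 'k::field) lpoly set" where
  "polyring S = {f :: ('p, 'k) lpoly. \<forall>m \<in> Poly_Mapping.keys f. Poly_Mapping.keys m \<subseteq> S}"

definition ideal_in :: "('p, 'k::field) lpoly set \<Rightarrow> ('p, 'k) lpoly set \<Rightarrow> ('p, 'k) lpoly set" where
  "ideal_in A G = {\<Sum>g\<in>F. a g * g | F a. finite F \<and> F \<subseteq> G \<and> (\<forall>g\<in>F. a g \<in> A)}"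

definition hom_ideal :: "('p::order \<Rightarrow> nat) set \<Rightarrow> bool" where
  "hom_ideal J \<longleftrightarrow> (\<forall>\<psi>\<in>J. mono \<psi>) \<and>
     (\<forall>\<psi>\<in>J. \<forall>\<chi>. mono \<chi> \<and> \<chi> \<le> \<psi> \<longrightarrow> \<chi> \<in> J)"

definition poset_ideal :: "'p::order set \<Rightarrow> bool" where
  "poset_ideal I \<longleftrightarrow> (\<forall>p\<in>I. \<forall>q. q \<le> p \<longrightarrow> q \<in> I)"

text \<open>A marker for J: poset ideal I with isotone alpha on I such that every
  isotone extension of alpha to P lies in J.  Only the values of alpha on I matter.\<close>
definition marker :: "('p::order \<Rightarrow> nat) set \<Rightarrow> 'p set \<Rightarrow> ('p \<Rightarrow> nat) \<Rightarrow> bool" where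
  "marker J I \<alpha> \<longleftrightarrow> poset_ideal I \<and> mono_on I \<alpha> \<and>
     (\<forall>\<psi>. mono \<psi> \<and> (\<forall>p\<in>I. \<psi> p = \<alpha> p) \<longrightarrow> \<psi> \<in> J)"

definition graph :: "'p set \<Rightarrow> ('p \<Rightarrow> nat) \<Rightarrow> ('p \<times> nat) set" where
  "graph I \<alpha> = {(p, \<alpha> p) | p. p \<in> I}"

text \<open>Graphs of markers = supports of the generators m_{Gamma alpha} of L(P,J)\<close>
definition marker_graphs :: "('p::order \<Rightarrow> nat) set \<Rightarrow> ('p \<times> nat) set set" where
  "marker_graphs J = {graph I \<alpha> | I \<alpha>. marker J I \<alpha>}"

text \<open>Minimal monomial generators of L(P,J): squarefree monomials m_G, G a marker
  graph, not properly divisible by another generator (divisibility = inclusion).\<close>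
definition min_gen_graphs :: "('p::order \<Rightarrow> nat) set \<Rightarrow> ('p \<times> nat) set set" where
  "min_gen_graphs J = {G \<in> marker_graphs J. \<not> (\<exists>H\<in>marker_graphs J. H \<subset> G)}"

definition Supp :: "('p::order \<Rightarrow> nat) set \<Rightarrow> ('p \<times> nat) set" where
  "Supp J = \<Union>(min_gen_graphs J)"

text \<open>Co-letterplace ideal L(P,J) as an ideal of k[x_S], generated by its
  minimal monomial generators.\<close>
definition coletterplace :: "('p \<times> nat) set \<Rightarrow> ('p::order \<Rightarrow> nat) set \<Rightarrow> ('p, 'k::field) lpoly set" where
  "coletterplace S J = ideal_in (polyring S) (sqmon ` min_gen_graphs J)"

definition prod_le :: "'p::order \<times> nat \<Rightarrow> 'p \<times> nat \<Rightarrow> bool" where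
  "prod_le s t \<longleftrightarrow> fst s \<le> fst t \<and> snd s \<le> snd t"

definition op_prod_le :: "'p::order \<times> nat \<Rightarrow> 'p \<times> nat \<Rightarrow> bool" where
  "op_prod_le s t \<longleftrightarrow> fst t \<le> fst s \<and> snd s \<le> snd t"

definition left_strict_chain_fibers :: "('p::order \<times> nat) set \<Rightarrow> ('p \<times> nat \<Rightarrow> 'r) \<Rightarrow> bool" where
  "left_strict_chain_fibers S \<phi> \<longleftrightarrow>
     (\<forall>r. \<forall>s\<in>S. \<forall>t\<in>S. \<phi> s = r \<and> \<phi> t = r \<longrightarrow>
        (op_prod_le s t \<or> op_prod_le t s) \<and> (s \<noteq> t \<longrightarrow> fst s \<noteq> fst t))"

text \<open>Kernel of the linear map  (+)_{s in S} k x_s -> (+)_{r in R} k x_r, x_s |-> x_{phi s},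
  with linear forms viewed as polynomials.\<close>
definition lin_kernel :: "('p \<times> nat) set \<Rightarrow> ('p \<times> nat \<Rightarrow> 'r) \<Rightarrow> ('p, 'k::field) lpoly set" where
  "lin_kernel S \<phi> = {\<Sum>s\<in>S. cscale (c s) (var s) | c.
      \<forall>r. (\<Sum>s\<in>{s\<in>S. \<phi> s = r}. c s) = 0}"

definition regular_seq :: "('p \<times> nat) set \<Rightarrow> ('p, 'k::field) lpoly set \<Rightarrow> ('p, 'k) lpoly list \<Rightarrow> bool" where
  "regular_seq S L fs \<longleftrightarrow>
     (\<forall>i<length fs. \<forall>g\<in>polyring S.
        fs ! i * g \<in> ideal_in (polyring S) (L \<union> set (take i fs)) \<longrightarrow>
        g \<in> ideal_in (polyring S) (L \<union> set (take i fs))) \<and>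
     (1 \<notin> ideal_in (polyring S) L \<longrightarrow> 1 \<notin> ideal_in (polyring S) (L \<union> set fs))"

end

theory Submission
  imports Defs
begin

(* Let b = x_s - x_t be the next element of the sequence and E the set of the earlier ones.
   Identifying all variables joined by an element of E is a renaming of variables which is
   congruent to the identity modulo (E), kills E, and maps L(P,J) into the monomial ideal M
   generated by the renamed generators m_G.  As B is independent, b is not in the span of E,
   so x_s and x_t are renamed to distinct variables x_y and x_z.
   Because the fibres of phi are left strict chains, two markers can be merged into a marker
   whose graph lies inside one of the two graphs on every left strict chain and inside both
   graphs on the fibre through s and t.  Hence M contains every monomial dividing the
   componentwise minimum of two of its monomials that differ only in the exponents of x_y and
   x_z, which makes x_y - x_z a nonzerodivisor modulo M; pulling back along the renaming,
   b is a nonzerodivisor modulo L(P,J) + (E).  The final quotient stays nonzero because all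
   generators have zero constant term. *)

lemma poly_mapping_sum_single_lookup:
  "(p::'a \<Rightarrow>\<^sub>0 'b::comm_monoid_add) =
     (\<Sum>k\<in>Poly_Mapping.keys p. Poly_Mapping.single k (Poly_Mapping.lookup p k))"
  by (rule poly_mapping_eqI)
     (auto simp: lookup_sum lookup_single when_def in_keys_iff sum.delta)

lemma polyringI:
  "(\<And>m. m \<in> Poly_Mapping.keys f \<Longrightarrow> Poly_Mapping.keys m \<subseteq> S) \<Longrightarrow> f \<in> polyring S"
  by (auto simp: polyring_def)

lemma polyringD: "f \<in> polyring S \<Longrightarrow> m \<in> Poly_Mapping.keys f \<Longrightarrow> Poly_Mapping.keys m \<subseteq> S"
  by (auto simp: polyring_def)

lemma polyring_single: "Poly_Mapping.keys m \<subseteq> S \<Longrightarrow> Poly_Mapping.single m c \<in> polyring S"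
  by (auto simp: polyring_def)

lemma polyring_zero: "0 \<in> polyring S"
  by (auto simp: polyring_def)

lemma polyring_one: "1 \<in> polyring S"
  by (auto simp: polyring_def)

lemma polyring_add: "f \<in> polyring S \<Longrightarrow> g \<in> polyring S \<Longrightarrow> f + g \<in> polyring S"
  using keys_add[of f g] by (auto simp: polyring_def)

lemma polyring_uminus: "f \<in> polyring S \<Longrightarrow> - f \<in> polyring S"
  by (simp add: polyring_def)

lemma polyring_diff: "f \<in> polyring S \<Longrightarrow> g \<in> polyring S \<Longrightarrow> f - g \<in> polyring S"
  using polyring_add[of f S "- g"] polyring_uminus[of g S] by simp

lemma polyring_mult:
  assumes "f \<in> polyring S" "g \<in> polyring S"
  shows "f * g \<in> polyring S"
proof (rule polyringI)
  fix m assume "m \<in> Poly_Mapping.keys (f * g)"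
  then obtain a b where "m = a + b" "a \<in> Poly_Mapping.keys f" "b \<in> Poly_Mapping.keys g"
    using keys_mult by blast
  then show "Poly_Mapping.keys m \<subseteq> S"
    using keys_add[of a b] polyringD[OF assms(1)] polyringD[OF assms(2)] by blast
qed

lemma polyring_sum: "(\<And>i. i \<in> I \<Longrightarrow> f i \<in> polyring S) \<Longrightarrow> sum f I \<in> polyring S"
  by (induction I rule: infinite_finite_induct) (auto intro: polyring_add polyring_zero)

lemma polyring_var: "s \<in> S \<Longrightarrow> (var s :: ('p, 'k::field) lpoly) \<in> polyring S"
  unfolding var_def by (rule polyring_single) simp

lemma keys_sum_single_subset:
  "Poly_Mapping.keys (\<Sum>v\<in>V. Poly_Mapping.single (r v) (e v :: nat)) \<subseteq> r ` V"
  using keys_sum[of "\<lambda>v. Poly_Mapping.single (r v) (e v)" V] by auto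

lemma polyring_sqmon: "G \<subseteq> S \<Longrightarrow> (sqmon G :: ('p, 'k::field) lpoly) \<in> polyring S"
  unfolding sqmon_def
  by (rule polyring_single) (use keys_sum_single_subset[of "\<lambda>t. t" "\<lambda>_. 1" G] in blast)

lemma ideal_inI:
  "finite F \<Longrightarrow> F \<subseteq> G \<Longrightarrow> (\<And>g. g \<in> F \<Longrightarrow> a g \<in> A) \<Longrightarrow> (\<Sum>g\<in>F. a g * g) \<in> ideal_in A G"
  unfolding ideal_in_def by blast

lemma ideal_in_zero: "0 \<in> ideal_in A G"
  using ideal_inI[of "{}" G "\<lambda>_. 0" A] by simp

lemma ideal_in_mono: "G \<subseteq> H \<Longrightarrow> ideal_in A G \<subseteq> ideal_in A H"
  unfolding ideal_in_def by blast

lemma ideal_in_generator: "g \<in> G \<Longrightarrow> g \<in> ideal_in (polyring S) G"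
  using ideal_inI[of "{g}" G "\<lambda>_. 1" "polyring S"] by (simp add: polyring_one)

lemma ideal_in_add:
  assumes "x \<in> ideal_in (polyring S) G" "y \<in> ideal_in (polyring S) G"
  shows "x + y \<in> ideal_in (polyring S) G"
proof -
  obtain F1 a1 where F1: "finite F1" "F1 \<subseteq> G" "\<And>g. g \<in> F1 \<Longrightarrow> a1 g \<in> polyring S"
    and x: "x = (\<Sum>g\<in>F1. a1 g * g)"
    using assms(1) unfolding ideal_in_def by blast
  obtain F2 a2 where F2: "finite F2" "F2 \<subseteq> G" "\<And>g. g \<in> F2 \<Longrightarrow> a2 g \<in> polyring S"
    and y: "y = (\<Sum>g\<in>F2. a2 g * g)"
    using assms(2) unfolding ideal_in_def by blast
  define b1 where "b1 g = (if g \<in> F1 then a1 g else 0)" for g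
  define b2 where "b2 g = (if g \<in> F2 then a2 g else 0)" for g
  have "x = (\<Sum>g\<in>F1 \<union> F2. b1 g * g)" "y = (\<Sum>g\<in>F1 \<union> F2. b2 g * g)"
    unfolding x y b1_def b2_def using F1(1) F2(1)
    by (auto intro: sum.mono_neutral_cong_left)
  then have "x + y = (\<Sum>g\<in>F1 \<union> F2. (b1 g + b2 g) * g)"
    by (simp add: sum.distrib distrib_right)
  also have "\<dots> \<in> ideal_in (polyring S) G"
    using F1 F2 by (intro ideal_inI) (auto simp: b1_def b2_def intro: polyring_add polyring_zero)
  finally show ?thesis .
qed

lemma ideal_in_mult:
  assumes "x \<in> ideal_in (polyring S) G" "c \<in> polyring S"
  shows "c * x \<in> ideal_in (polyring S) G"
proof -
  obtain F a where F: "finite F" "F \<subseteq> G" "\<And>g. g \<in> F \<Longrightarrow> a g \<in> polyring S"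
    and x: "x = (\<Sum>g\<in>F. a g * g)"
    using assms(1) unfolding ideal_in_def by blast
  have "c * x = (\<Sum>g\<in>F. (c * a g) * g)"
    unfolding x by (simp add: sum_distrib_left mult.assoc)
  also have "\<dots> \<in> ideal_in (polyring S) G"
    using F assms(2) by (intro ideal_inI) (auto intro: polyring_mult)
  finally show ?thesis .
qed

lemma ideal_in_uminus:
  "x \<in> ideal_in (polyring S) G \<Longrightarrow> - x \<in> ideal_in (polyring S) (G :: ('p, 'k::field) lpoly set)"
  using ideal_in_mult[of x S G "- 1"] polyring_one polyring_uminus by fastforce

lemma ideal_in_diff:
  "x \<in> ideal_in (polyring S) G \<Longrightarrow> y \<in> ideal_in (polyring S) G \<Longrightarrow>
    x - y \<in> ideal_in (polyring S) (G :: ('p, 'k::field) lpoly set)"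
  using ideal_in_add[of x S G "- y"] ideal_in_uminus[of y S G] by simp

lemma ideal_in_sum:
  "(\<And>i. i \<in> I \<Longrightarrow> f i \<in> ideal_in (polyring S) G) \<Longrightarrow> sum f I \<in> ideal_in (polyring S) G"
  by (induction I rule: infinite_finite_induct) (auto intro: ideal_in_add ideal_in_zero)

lemma ideal_in_subset_ideal_in:
  assumes "G \<subseteq> ideal_in (polyring S) H"
  shows "ideal_in (polyring S) G \<subseteq> ideal_in (polyring S) (H :: ('p, 'k::field) lpoly set)"
proof
  fix x assume "x \<in> ideal_in (polyring S) G"
  then obtain F a where "finite F" "F \<subseteq> G" "\<And>g. g \<in> F \<Longrightarrow> a g \<in> polyring S"
    and x: "x = (\<Sum>g\<in>F. a g * g)"
    unfolding ideal_in_def by blast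
  then show "x \<in> ideal_in (polyring S) H"
    unfolding x using assms by (intro ideal_in_sum ideal_in_mult) auto
qed

lemma ideal_in_mult_diff:
  assumes "a - a' \<in> ideal_in (polyring S) G" "b - b' \<in> ideal_in (polyring S) G"
    and "a \<in> polyring S" "b' \<in> polyring S"
  shows "a * b - a' * b' \<in> ideal_in (polyring S) (G :: ('p, 'k::field) lpoly set)"
proof -
  have "a * b - a' * b' = a * (b - b') + b' * (a - a')"
    by (simp add: algebra_simps)
  then show ?thesis
    using assms by (simp add: ideal_in_add ideal_in_mult)
qed

lemma lookup_mult_zero:
  "Poly_Mapping.lookup (f * g) (0::'a \<Rightarrow>\<^sub>0 nat) =
     Poly_Mapping.lookup f 0 * (Poly_Mapping.lookup g 0 :: 'k::comm_semiring_1)"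
proof -
  have add_eq_0: "l + q = 0 \<longleftrightarrow> l = 0 \<and> q = 0" for l q :: "'a \<Rightarrow>\<^sub>0 nat"
    by (metis add_is_0 lookup_add lookup_zero poly_mapping_eqI add_0)
  have "(\<Sum>q. Poly_Mapping.lookup g q when 0 = l + q) = (Poly_Mapping.lookup g 0 when l = 0)"
    for l :: "'a \<Rightarrow>\<^sub>0 nat"
    by (cases "l = 0") (simp_all add: add_eq_0 eq_commute[of 0])
  then show ?thesis
    by (simp add: lookup_mult mult_when)
qed

lemma ideal_in_constant_term:
  assumes "\<And>g. g \<in> G \<Longrightarrow> Poly_Mapping.lookup g 0 = 0"
    and "f \<in> ideal_in A (G :: ('p, 'k::field) lpoly set)"
  shows "Poly_Mapping.lookup f 0 = 0"
  using assms unfolding ideal_in_def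
  by (fastforce simp: lookup_sum lookup_mult_zero intro!: sum.neutral)

section \<open>Renaming variables\<close>

definition additive_extension ::
    "('a \<Rightarrow> 'b::comm_monoid_add \<Rightarrow> 'c::comm_monoid_add) \<Rightarrow> ('a \<Rightarrow>\<^sub>0 'b) \<Rightarrow> 'c" where
  "additive_extension h p = (\<Sum>k\<in>Poly_Mapping.keys p. h k (Poly_Mapping.lookup p k))"

lemma additive_extension_zero [simp]: "additive_extension h 0 = 0"
  by (simp add: additive_extension_def)

lemma additive_extension_single:
  "(\<And>k. h k 0 = 0) \<Longrightarrow> additive_extension h (Poly_Mapping.single k v) = h k v"
  unfolding additive_extension_def by (cases "v = 0") simp_all

context
  fixes h :: "'a \<Rightarrow> 'b::comm_monoid_add \<Rightarrow> 'c::comm_monoid_add"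
  assumes h_zero: "\<And>k. h k 0 = 0" and h_add: "\<And>k a b. h k (a + b) = h k a + h k b"
begin

lemma additive_extension_add:
  "additive_extension h (p + q) = additive_extension h p + additive_extension h q"
  unfolding additive_extension_def by (rule setsum_keys_plus_distrib) (use h_zero h_add in auto)

lemma additive_extension_sum:
  "additive_extension h (sum f I) = (\<Sum>i\<in>I. additive_extension h (f i))"
  by (induction I rule: infinite_finite_induct) (simp_all add: additive_extension_add)

end

definition rename_monomial :: "('a \<Rightarrow> 'a) \<Rightarrow> ('a \<Rightarrow>\<^sub>0 nat) \<Rightarrow> ('a \<Rightarrow>\<^sub>0 nat)" where
  "rename_monomial \<rho> = additive_extension (\<lambda>v n. Poly_Mapping.single (\<rho> v) n)"

definition rename_vars ::
    "('a \<Rightarrow> 'a) \<Rightarrow> (('a \<Rightarrow>\<^sub>0 nat) \<Rightarrow>\<^sub>0 'k::comm_ring_1) \<Rightarrow> (('a \<Rightarrow>\<^sub>0 nat) \<Rightarrow>\<^sub>0 'k)" where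
  "rename_vars \<rho> = additive_extension (\<lambda>m c. Poly_Mapping.single (rename_monomial \<rho> m) c)"

lemma rename_monomial_add:
  "rename_monomial \<rho> (m + n) = rename_monomial \<rho> m + rename_monomial \<rho> n"
  unfolding rename_monomial_def by (rule additive_extension_add) (simp_all add: single_add)

lemma rename_monomial_sum:
  "rename_monomial \<rho> (sum f I) = (\<Sum>i\<in>I. rename_monomial \<rho> (f i))"
  unfolding rename_monomial_def by (intro additive_extension_sum single_zero single_add)

lemma rename_monomial_single:
  "rename_monomial \<rho> (Poly_Mapping.single v k) = Poly_Mapping.single (\<rho> v) k"
  unfolding rename_monomial_def by (rule additive_extension_single) simp

lemma keys_rename_monomial: "Poly_Mapping.keys (rename_monomial \<rho> m) \<subseteq> \<rho> ` Poly_Mapping.keys m"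
  unfolding rename_monomial_def additive_extension_def by (rule keys_sum_single_subset)

lemma rename_vars_add: "rename_vars \<rho> (f + g) = rename_vars \<rho> f + rename_vars \<rho> g"
  unfolding rename_vars_def by (intro additive_extension_add single_zero single_add)

lemma rename_vars_sum: "rename_vars \<rho> (sum f I) = (\<Sum>i\<in>I. rename_vars \<rho> (f i))"
  unfolding rename_vars_def by (intro additive_extension_sum single_zero single_add)

lemma rename_vars_single:
  "rename_vars \<rho> (Poly_Mapping.single m c) = Poly_Mapping.single (rename_monomial \<rho> m) c"
  unfolding rename_vars_def by (rule additive_extension_single) simp

lemma rename_vars_eq_sum:
  "rename_vars \<rho> f = (\<Sum>m\<in>Poly_Mapping.keys f.
     Poly_Mapping.single (rename_monomial \<rho> m) (Poly_Mapping.lookup f m))"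
  unfolding rename_vars_def additive_extension_def ..

lemma rename_vars_diff: "rename_vars \<rho> (f - g) = rename_vars \<rho> f - rename_vars \<rho> g"
proof -
  have "rename_vars \<rho> (f - g) + rename_vars \<rho> g = rename_vars \<rho> f"
    by (simp flip: rename_vars_add)
  then show ?thesis
    by (simp add: eq_diff_eq)
qed

lemma rename_vars_mult: "rename_vars \<rho> (f * g) = rename_vars \<rho> f * rename_vars \<rho> g"
proof -
  let ?mon = "\<lambda>p m. Poly_Mapping.single m (Poly_Mapping.lookup p m)"
  let ?ren = "\<lambda>p m. Poly_Mapping.single (rename_monomial \<rho> m) (Poly_Mapping.lookup p m)"
  have "f * g = (\<Sum>m\<in>Poly_Mapping.keys f. ?mon f m) * (\<Sum>n\<in>Poly_Mapping.keys g. ?mon g n)"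
    using poly_mapping_sum_single_lookup[of f] poly_mapping_sum_single_lookup[of g] by simp
  also have "\<dots> = (\<Sum>m\<in>Poly_Mapping.keys f. \<Sum>n\<in>Poly_Mapping.keys g. ?mon f m * ?mon g n)"
    by (rule sum_product)
  finally have "rename_vars \<rho> (f * g) =
      (\<Sum>m\<in>Poly_Mapping.keys f. \<Sum>n\<in>Poly_Mapping.keys g. ?ren f m * ?ren g n)"
    by (simp add: rename_vars_sum mult_single rename_vars_single rename_monomial_add)
  also have "\<dots> = rename_vars \<rho> f * rename_vars \<rho> g"
    unfolding rename_vars_eq_sum[of \<rho> f] rename_vars_eq_sum[of \<rho> g] by (rule sum_product[symmetric])
  finally show ?thesis .
qed

lemma rename_vars_var: "rename_vars \<rho> (var u :: ('p, 'k::field) lpoly) = var (\<rho> u)"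
  unfolding var_def by (simp add: rename_vars_single rename_monomial_single)

definition graph_exponent :: "('a \<Rightarrow> 'a) \<Rightarrow> 'a set \<Rightarrow> ('a \<Rightarrow>\<^sub>0 nat)" where
  "graph_exponent \<rho> G = (\<Sum>x\<in>G. Poly_Mapping.single (\<rho> x) 1)"

lemma rename_vars_sqmon:
  "rename_vars \<rho> (sqmon G :: ('p, 'k::field) lpoly) = Poly_Mapping.single (graph_exponent \<rho> G) 1"
  unfolding sqmon_def graph_exponent_def
  by (simp add: rename_vars_single rename_monomial_sum rename_monomial_single)

context
  fixes S :: "('p \<times> nat) set" and \<rho> :: "'p \<times> nat \<Rightarrow> 'p \<times> nat"
  assumes \<rho>_into: "\<And>u. u \<in> S \<Longrightarrow> \<rho> u \<in> S"
begin

lemma polyring_rename_vars: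
  assumes "f \<in> polyring S"
  shows "rename_vars \<rho> (f :: ('p, 'k::field) lpoly) \<in> polyring S"
  unfolding rename_vars_eq_sum
proof (rule polyring_sum, rule polyring_single)
  fix m assume "m \<in> Poly_Mapping.keys f"
  then have "Poly_Mapping.keys m \<subseteq> S"
    by (rule polyringD[OF assms])
  then show "Poly_Mapping.keys (rename_monomial \<rho> m) \<subseteq> S"
    using keys_rename_monomial[of \<rho> m] \<rho>_into by fastforce
qed

lemma rename_vars_ideal_in:
  assumes "\<And>y. y \<in> Y \<Longrightarrow> rename_vars \<rho> y \<in> ideal_in (polyring S) Z"
    and "f \<in> ideal_in (polyring S) (Y :: ('p, 'k::field) lpoly set)"
  shows "rename_vars \<rho> f \<in> ideal_in (polyring S) Z"
proof -
  obtain F a where F: "finite F" "F \<subseteq> Y" "\<And>g. g \<in> F \<Longrightarrow> a g \<in> polyring S"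
    and f: "f = (\<Sum>g\<in>F. a g * g)"
    using assms(2) unfolding ideal_in_def by blast
  have "rename_vars \<rho> f = (\<Sum>g\<in>F. rename_vars \<rho> (a g) * rename_vars \<rho> g)"
    unfolding f rename_vars_sum rename_vars_mult ..
  also have "\<dots> \<in> ideal_in (polyring S) Z"
  proof (intro ideal_in_sum ideal_in_mult polyring_rename_vars)
    fix g assume "g \<in> F"
    then show "rename_vars \<rho> g \<in> ideal_in (polyring S) Z" "a g \<in> polyring S"
      using F assms(1) by auto
  qed
  finally show ?thesis .
qed

context
  fixes X :: "('p, 'k::field) lpoly set"
  assumes var_diff_rename: "\<And>u. u \<in> S \<Longrightarrow> var u - var (\<rho> u) \<in> ideal_in (polyring S) X"
begin

lemma single_power_diff_rename:
  assumes "u \<in> S"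
  shows "Poly_Mapping.single (Poly_Mapping.single u k) 1 -
    Poly_Mapping.single (Poly_Mapping.single (\<rho> u) k) (1::'k) \<in> ideal_in (polyring S) X"
proof (induction k)
  case 0
  then show ?case by (simp add: ideal_in_zero)
next
  case (Suc k)
  have power_Suc: "Poly_Mapping.single (Poly_Mapping.single w (Suc k)) (1::'k) =
    var w * Poly_Mapping.single (Poly_Mapping.single w k) 1" for w
    unfolding var_def mult_single by (simp add: single_add[symmetric])
  have "Poly_Mapping.single (Poly_Mapping.single (\<rho> u) k) (1::'k) \<in> polyring S"
    using \<rho>_into[OF assms] by (intro polyring_single) simp
  then show ?case
    unfolding power_Suc
    by (rule ideal_in_mult_diff[OF var_diff_rename[OF assms] Suc polyring_var[OF assms]])
qed

lemma single_diff_rename: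
  assumes "Poly_Mapping.keys m \<subseteq> S"
  shows "Poly_Mapping.single m c - Poly_Mapping.single (rename_monomial \<rho> m) c
    \<in> ideal_in (polyring S) X"
proof -
  have "finite V \<Longrightarrow> V \<subseteq> S \<Longrightarrow>
    Poly_Mapping.single (\<Sum>v\<in>V. Poly_Mapping.single v (e v)) c -
    Poly_Mapping.single (\<Sum>v\<in>V. Poly_Mapping.single (\<rho> v) (e v)) c \<in> ideal_in (polyring S) X"
    for V e
  proof (induction V rule: finite_induct)
    case empty
    then show ?case by (simp add: ideal_in_zero)
  next
    case (insert w V)
    let ?M' = "\<Sum>v\<in>V. Poly_Mapping.single (\<rho> v) (e v)"
    have split: "Poly_Mapping.single (\<Sum>v\<in>insert w V. Poly_Mapping.single (r v) (e v)) c =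
      Poly_Mapping.single (Poly_Mapping.single (r w) (e w)) 1 *
      Poly_Mapping.single (\<Sum>v\<in>V. Poly_Mapping.single (r v) (e v)) c" for r :: "_ \<Rightarrow> 'p \<times> nat"
      using insert(1,2) by (simp add: mult_single)
    have "Poly_Mapping.single (Poly_Mapping.single w (e w)) (1::'k) \<in> polyring S"
      using insert(4) by (intro polyring_single) simp
    moreover have "Poly_Mapping.single ?M' c \<in> polyring S"
      using insert(4) \<rho>_into keys_sum_single_subset[of \<rho> e V] by (intro polyring_single) blast
    ultimately show ?case
      using insert single_power_diff_rename[of w "e w"]
      unfolding split[of "\<lambda>v. v"] split[of \<rho>] by (intro ideal_in_mult_diff) auto
  qed
  from this[of "Poly_Mapping.keys m" "Poly_Mapping.lookup m"] show ?thesis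
    using assms poly_mapping_sum_single_lookup[of m]
    by (simp add: rename_monomial_def additive_extension_def)
qed

lemma diff_rename_vars:
  assumes "f \<in> polyring S"
  shows "f - rename_vars \<rho> f \<in> ideal_in (polyring S) X"
proof -
  have "f - rename_vars \<rho> f = (\<Sum>m\<in>Poly_Mapping.keys f.
    Poly_Mapping.single m (Poly_Mapping.lookup f m) -
    Poly_Mapping.single (rename_monomial \<rho> m) (Poly_Mapping.lookup f m))"
    using poly_mapping_sum_single_lookup[of f] by (simp add: rename_vars_eq_sum sum_subtractf)
  also have "\<dots> \<in> ideal_in (polyring S) X"
    using polyringD[OF assms] by (intro ideal_in_sum single_diff_rename)
  finally show ?thesis .
qed

end

end

section \<open>Monomial ideals\<close>

definition multiples :: "('a \<Rightarrow>\<^sub>0 nat) set \<Rightarrow> ('a \<Rightarrow>\<^sub>0 nat) set" where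
  "multiples E = {n. \<exists>e\<in>E. \<forall>v. Poly_Mapping.lookup e v \<le> Poly_Mapping.lookup n v}"

abbreviation monomial_ideal ::
    "('p \<times> nat) set \<Rightarrow> (('p \<times> nat) \<Rightarrow>\<^sub>0 nat) set \<Rightarrow> ('p, 'k::field) lpoly set" where
  "monomial_ideal S E \<equiv> ideal_in (polyring S) ((\<lambda>e. Poly_Mapping.single e 1) ` E)"

lemma keys_monomial_ideal:
  assumes "f \<in> monomial_ideal S E" and "n \<in> Poly_Mapping.keys f"
  shows "n \<in> multiples E"
proof -
  obtain F a where F: "F \<subseteq> (\<lambda>e. Poly_Mapping.single e 1) ` E" and f: "f = (\<Sum>g\<in>F. a g * g)"
    using assms(1) unfolding ideal_in_def by blast
  obtain g where "g \<in> F" and "n \<in> Poly_Mapping.keys (a g * g)"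
    using assms(2) keys_sum[of "\<lambda>g. a g * g" F] unfolding f by blast
  moreover obtain e where "e \<in> E" and "g = Poly_Mapping.single e 1"
    using \<open>g \<in> F\<close> F by blast
  ultimately obtain k where "n = k + e"
    using keys_mult[of "a g" g] by auto
  then show ?thesis
    using \<open>e \<in> E\<close> by (force simp: multiples_def lookup_add)
qed

lemma single_in_monomial_ideal:
  assumes "n \<in> multiples E" and "Poly_Mapping.keys n \<subseteq> S"
  shows "Poly_Mapping.single n c \<in> (monomial_ideal S E :: ('p, 'k::field) lpoly set)"
proof -
  obtain e where "e \<in> E" and le: "\<And>v. Poly_Mapping.lookup e v \<le> Poly_Mapping.lookup n v"
    using assms(1) unfolding multiples_def by blast
  have "n = (n - e) + e"
    using le by (intro poly_mapping_eqI) (simp add: lookup_add lookup_minus)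
  then have "Poly_Mapping.single n c = Poly_Mapping.single (n - e) c * Poly_Mapping.single e (1::'k)"
    by (simp add: mult_single)
  moreover have "Poly_Mapping.keys (n - e) \<subseteq> S"
    using assms(2) by (auto simp: in_keys_iff lookup_minus)
  ultimately show ?thesis
    using \<open>e \<in> E\<close> by (auto intro: ideal_in_mult ideal_in_generator polyring_single)
qed

lemma monomial_ideal_memI:
  assumes "f \<in> polyring S" and "Poly_Mapping.keys f \<subseteq> multiples E"
  shows "f \<in> (monomial_ideal S E :: ('p, 'k::field) lpoly set)"
proof (subst poly_mapping_sum_single_lookup, rule ideal_in_sum)
  fix m assume "m \<in> Poly_Mapping.keys f"
  then show "Poly_Mapping.single m (Poly_Mapping.lookup f m) \<in> monomial_ideal S E"
    using assms by (intro single_in_monomial_ideal) (auto dest: polyringD)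
qed

lemma lookup_single_mult:
  "Poly_Mapping.lookup (Poly_Mapping.single e c * h) n =
     (\<Sum>m\<in>Poly_Mapping.keys h. (c * Poly_Mapping.lookup h m when e + m = n))"
proof -
  have "Poly_Mapping.single e c * h =
    (\<Sum>m\<in>Poly_Mapping.keys h. Poly_Mapping.single (e + m) (c * Poly_Mapping.lookup h m))"
    by (subst (1) poly_mapping_sum_single_lookup[of h]) (simp add: sum_distrib_left mult_single)
  then show ?thesis
    by (simp add: lookup_sum lookup_single)
qed

lemma lookup_single_mult_add:
  fixes h :: "('a \<Rightarrow>\<^sub>0 nat) \<Rightarrow>\<^sub>0 'k::field"
  shows "Poly_Mapping.lookup (Poly_Mapping.single e c * h) (e + m) = c * Poly_Mapping.lookup h m"
  unfolding lookup_single_mult add_left_cancel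
  by (cases "m \<in> Poly_Mapping.keys h") (simp_all add: when_def in_keys_iff)

lemma lookup_single_mult_nonzero:
  assumes "Poly_Mapping.lookup (Poly_Mapping.single e c * h) n \<noteq> 0"
  obtains m where "m \<in> Poly_Mapping.keys h" and "n = e + m"
proof -
  have "\<exists>m\<in>Poly_Mapping.keys h. e + m = n"
    using assms unfolding lookup_single_mult by (auto intro: sum.neutral)
  then show ?thesis
    using that by auto
qed

definition agree_outside :: "'a set \<Rightarrow> ('a \<Rightarrow>\<^sub>0 nat) \<Rightarrow> ('a \<Rightarrow>\<^sub>0 nat) \<Rightarrow> bool" where
  "agree_outside V m n \<longleftrightarrow> (\<forall>v. v \<notin> V \<longrightarrow> Poly_Mapping.lookup m v = Poly_Mapping.lookup n v)"

definition exchange_equiv :: "'a \<Rightarrow> 'a \<Rightarrow> ('a \<Rightarrow>\<^sub>0 nat) \<Rightarrow> ('a \<Rightarrow>\<^sub>0 nat) \<Rightarrow> bool" where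
  "exchange_equiv y z m n \<longleftrightarrow> agree_outside {y, z} m n \<and>
     Poly_Mapping.lookup m y + Poly_Mapping.lookup m z = Poly_Mapping.lookup n y + Poly_Mapping.lookup n z"

definition meet_closed :: "'a \<Rightarrow> 'a \<Rightarrow> ('a \<Rightarrow>\<^sub>0 nat) set \<Rightarrow> bool" where
  "meet_closed y z M \<longleftrightarrow> (\<forall>n1\<in>M. \<forall>n2\<in>M. \<forall>n. agree_outside {y, z} n1 n2 \<and>
     (\<forall>v. min (Poly_Mapping.lookup n1 v) (Poly_Mapping.lookup n2 v) \<le> Poly_Mapping.lookup n v)
     \<longrightarrow> n \<in> M)"

lemma exchange_equiv_commute: "exchange_equiv z y = exchange_equiv y z"
  by (auto simp: exchange_equiv_def agree_outside_def fun_eq_iff insert_commute)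

text \<open>Among the monomials of h obtained from m0 by trading powers of x_z for powers of x_y,
  the one with the largest power of x_y cannot cancel in (x_y - x_z) h.\<close>

lemma extreme_key_survives:
  fixes h :: "('p, 'k::field) lpoly"
  assumes "y \<noteq> z" and "m0 \<in> Poly_Mapping.keys h"
  obtains m where "m \<in> Poly_Mapping.keys h" and "exchange_equiv y z m0 m"
    and "\<And>m'. m' \<in> Poly_Mapping.keys h \<Longrightarrow> exchange_equiv y z m0 m' \<Longrightarrow>
      Poly_Mapping.lookup m' y \<le> Poly_Mapping.lookup m y"
    and "Poly_Mapping.single y 1 + m \<in> Poly_Mapping.keys ((var y - var z) * h)"
proof -
  let ?line = "\<lambda>m. m \<in> Poly_Mapping.keys h \<and> exchange_equiv y z m0 m"
  obtain m where m: "?line m" and max: "\<And>m'. ?line m' \<Longrightarrow> Poly_Mapping.lookup m' y \<le> Poly_Mapping.lookup m y"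
    using ex_has_greatest_nat[of ?line m0 "\<lambda>m. Poly_Mapping.lookup m y"
        "Poly_Mapping.lookup m0 y + Poly_Mapping.lookup m0 z + 1"] assms(2)
    by (force simp: exchange_equiv_def agree_outside_def)
  have "Poly_Mapping.lookup (var z * h) (Poly_Mapping.single y 1 + m) = 0"
  proof (rule ccontr)
    assume "Poly_Mapping.lookup (var z * h) (Poly_Mapping.single y 1 + m) \<noteq> 0"
    then obtain m' where "m' \<in> Poly_Mapping.keys h"
      and eq: "Poly_Mapping.single y 1 + m = Poly_Mapping.single z 1 + m'"
      unfolding var_def by (rule lookup_single_mult_nonzero)
    have pt: "Poly_Mapping.lookup m' v + (1 when z = v) = Poly_Mapping.lookup m v + (1 when y = v)" for v
      using arg_cong[OF eq, of "\<lambda>n. Poly_Mapping.lookup n v"] by (simp add: lookup_add lookup_single)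
    have "Poly_Mapping.lookup m' y = Poly_Mapping.lookup m y + 1"
      using pt[of y] assms(1) by simp
    moreover have "Poly_Mapping.lookup m' z + 1 = Poly_Mapping.lookup m z"
      using pt[of z] assms(1) by simp
    moreover have "agree_outside {y, z} m' m"
      unfolding agree_outside_def
    proof (intro allI impI)
      fix v assume "v \<notin> {y, z}"
      then show "Poly_Mapping.lookup m' v = Poly_Mapping.lookup m v"
        using pt[of v] by auto
    qed
    ultimately have "?line m'"
      and "Poly_Mapping.lookup m' y = Poly_Mapping.lookup m y + 1"
      using m \<open>m' \<in> Poly_Mapping.keys h\<close> by (auto simp: exchange_equiv_def agree_outside_def)
    then show False
      using max by fastforce
  qed
  then have "Poly_Mapping.lookup ((var y - var z) * h) (Poly_Mapping.single y 1 + m) =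
    Poly_Mapping.lookup h m"
    by (simp add: left_diff_distrib lookup_minus var_def lookup_single_mult_add)
  then show ?thesis
    using m max by (intro that[of m]) (auto simp: in_keys_iff)
qed

lemma diff_var_mult_eq_zero:
  fixes h :: "('p, 'k::field) lpoly"
  assumes "y \<noteq> z" and meet: "meet_closed y z (multiples E)"
    and outside: "\<And>n. n \<in> Poly_Mapping.keys h \<Longrightarrow> n \<notin> multiples E"
    and inside: "Poly_Mapping.keys ((var y - var z) * h) \<subseteq> multiples E"
  shows "h = 0"
proof (rule ccontr)
  assume "h \<noteq> 0"
  then obtain m0 where m0: "m0 \<in> Poly_Mapping.keys h"
    by (metis all_not_in_conv keys_eq_empty)
  obtain mh where mh: "mh \<in> Poly_Mapping.keys h" "exchange_equiv y z m0 mh"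
    and mh_key: "Poly_Mapping.single y 1 + mh \<in> Poly_Mapping.keys ((var y - var z) * h)"
    by (rule extreme_key_survives[OF assms(1) m0])
  obtain ml where ml: "ml \<in> Poly_Mapping.keys h" "exchange_equiv z y m0 ml"
    and ml_max: "\<And>m'. m' \<in> Poly_Mapping.keys h \<Longrightarrow> exchange_equiv z y m0 m' \<Longrightarrow>
      Poly_Mapping.lookup m' z \<le> Poly_Mapping.lookup ml z"
    and ml_key: "Poly_Mapping.single z 1 + ml \<in> Poly_Mapping.keys ((var z - var y) * h)"
    by (rule extreme_key_survives[OF assms(1)[symmetric] m0]) blast
  have "(var z - var y) * h = - ((var y - var z) * h)"
    by (simp add: algebra_simps)
  then have n1: "Poly_Mapping.single y 1 + mh \<in> multiples E"
    and n2: "Poly_Mapping.single z 1 + ml \<in> multiples E"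
    using mh_key ml_key inside by auto
  have ml': "exchange_equiv y z m0 ml"
    using ml(2) by (simp add: exchange_equiv_commute)
  have "Poly_Mapping.lookup mh z \<le> Poly_Mapping.lookup ml z"
    using ml_max[OF mh(1)] mh(2) by (simp add: exchange_equiv_commute)
  then have "\<forall>v. min (Poly_Mapping.lookup (Poly_Mapping.single y 1 + mh) v)
      (Poly_Mapping.lookup (Poly_Mapping.single z 1 + ml) v) \<le> Poly_Mapping.lookup ml v"
    using mh(2) ml' assms(1)
    by (auto simp: exchange_equiv_def agree_outside_def lookup_add lookup_single when_def)
  moreover have "agree_outside {y, z} (Poly_Mapping.single y 1 + mh) (Poly_Mapping.single z 1 + ml)"
    using mh(2) ml' by (auto simp: exchange_equiv_def agree_outside_def lookup_add lookup_single)
  ultimately have "ml \<in> multiples E"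
    using meet n1 n2 unfolding meet_closed_def by blast
  then show False
    using outside ml(1) by blast
qed

lemma monomial_ideal_nonzerodivisor:
  fixes h :: "('p, 'k::field) lpoly"
  assumes "y \<noteq> z" "y \<in> S" "z \<in> S" and meet: "meet_closed y z (multiples E)"
    and "h \<in> polyring S" and prod: "(var y - var z) * h \<in> monomial_ideal S E"
  shows "h \<in> monomial_ideal S E"
proof -
  define h_in where "h_in = Poly_Mapping.mapp (\<lambda>n c. if n \<in> multiples E then c else 0) h"
  define h_out where "h_out = Poly_Mapping.mapp (\<lambda>n c. if n \<in> multiples E then 0 else c) h"
  have split: "h = h_in + h_out"
    by (rule poly_mapping_eqI) (auto simp: h_in_def h_out_def lookup_add lookup_mapp when_def in_keys_iff)
  have "Poly_Mapping.keys h_in \<subseteq> Poly_Mapping.keys h"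
    unfolding h_in_def by (rule keys_mapp_subset)
  then have "h_in \<in> monomial_ideal S E"
    using \<open>h \<in> polyring S\<close>
    by (intro monomial_ideal_memI polyringI) (auto simp: h_in_def lookup_mapp in_keys_iff split: if_splits dest: polyringD)
  moreover have "h_out = 0"
  proof (rule diff_var_mult_eq_zero[OF assms(1) meet])
    show "n \<notin> multiples E" if "n \<in> Poly_Mapping.keys h_out" for n
      using that by (auto simp: h_out_def lookup_mapp in_keys_iff)
    have "(var y - var z) * h_out = (var y - var z) * h - (var y - var z) * h_in"
      by (simp add: split algebra_simps)
    also have "\<dots> \<in> monomial_ideal S E"
      using \<open>h_in \<in> monomial_ideal S E\<close> assms(2,3)
      by (intro ideal_in_diff[OF prod] ideal_in_mult polyring_diff polyring_var)
    finally show "Poly_Mapping.keys ((var y - var z) * h_out) \<subseteq> multiples E"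
      using keys_monomial_ideal by blast
  qed
  ultimately show ?thesis
    using split by simp
qed

section \<open>Merging markers along chains\<close>

definition left_strict_chain :: "('p::order \<times> nat) set \<Rightarrow> bool" where
  "left_strict_chain K \<longleftrightarrow>
     (\<forall>x\<in>K. \<forall>y\<in>K. (op_prod_le x y \<or> op_prod_le y x) \<and> (x \<noteq> y \<longrightarrow> fst x \<noteq> fst y))"

lemma left_strict_chain_fibers_iff:
  "left_strict_chain_fibers S \<phi> \<longleftrightarrow> (\<forall>r. left_strict_chain {s \<in> S. \<phi> s = r})"
  unfolding left_strict_chain_fibers_def left_strict_chain_def by blast

lemma marker_enlarge:
  fixes J :: "('p::{order,finite} \<Rightarrow> nat) set"
  assumes J: "hom_ideal J" and m: "marker J I \<alpha>" and "poset_ideal I'" and "I \<subseteq> I'"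
    and "mono_on I' \<beta>" and le: "\<And>p. p \<in> I \<Longrightarrow> \<beta> p \<le> \<alpha> p"
  shows "marker J I' \<beta>"
  unfolding marker_def
proof (intro conjI allI impI)
  fix \<psi> :: "'p \<Rightarrow> nat" assume \<psi>: "mono \<psi> \<and> (\<forall>p\<in>I'. \<psi> p = \<beta> p)"
  have I: "poset_ideal I" "mono_on I \<alpha>"
    and ext: "\<And>\<chi>. mono \<chi> \<Longrightarrow> (\<forall>p\<in>I. \<chi> p = \<alpha> p) \<Longrightarrow> \<chi> \<in> J"
    using m unfolding marker_def by blast+
  \<comment> \<open>raising \<psi> by a constant outside I gives an isotone extension of \<alpha> above \<psi>\<close>
  define C where "C = (\<Sum>p\<in>I. \<alpha> p)"
  have C: "\<alpha> p \<le> C" if "p \<in> I" for p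
    unfolding C_def using that by (intro member_le_sum) simp_all
  define \<chi> where "\<chi> p = (if p \<in> I then \<alpha> p else \<psi> p + C)" for p
  have "mono \<chi>"
  proof (rule monoI)
    fix p q :: 'p assume "p \<le> q"
    show "\<chi> p \<le> \<chi> q"
    proof (cases "q \<in> I")
      case True
      then have "p \<in> I"
        using I(1) \<open>p \<le> q\<close> unfolding poset_ideal_def by blast
      then show ?thesis
        using True I(2) \<open>p \<le> q\<close> by (simp add: \<chi>_def mono_on_def)
    next
      case False
      have "\<psi> p \<le> \<psi> q"
        using \<psi> \<open>p \<le> q\<close> unfolding mono_def by blast
      then show ?thesis
        using False C[of p] by (auto simp: \<chi>_def)
    qed
  qed
  then have "\<chi> \<in> J"
    by (rule ext) (simp add: \<chi>_def)
  moreover have "\<psi> \<le> \<chi>"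
    using \<psi> le \<open>I \<subseteq> I'\<close> by (auto simp: \<chi>_def le_fun_def)
  ultimately show "\<psi> \<in> J"
    using J \<psi> unfolding hom_ideal_def by blast
qed (use assms in auto)

definition above_graph :: "('p \<times> nat) set \<Rightarrow> 'p set \<Rightarrow> ('p \<Rightarrow> nat) \<Rightarrow> ('p \<times> nat) set" where
  "above_graph F I \<alpha> = {x \<in> F. fst x \<in> I \<and> \<alpha> (fst x) \<le> snd x}"

lemma above_graph_upward:
  assumes x: "x \<in> above_graph F I \<alpha>" and "y \<in> F" and "op_prod_le x y"
    and I: "poset_ideal I" and \<alpha>: "mono_on I \<alpha>"
  shows "y \<in> above_graph F I \<alpha>"
proof -
  have le: "fst y \<le> fst x" "snd x \<le> snd y"
    using \<open>op_prod_le x y\<close> unfolding op_prod_le_def by auto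
  have "fst x \<in> I" "\<alpha> (fst x) \<le> snd x"
    using x unfolding above_graph_def by auto
  moreover from this(1) have "fst y \<in> I"
    using I le(1) unfolding poset_ideal_def by blast
  moreover from calculation have "\<alpha> (fst y) \<le> \<alpha> (fst x)"
    using mono_onD[OF \<alpha>] le(1) by blast
  ultimately show ?thesis
    using \<open>y \<in> F\<close> le(2) unfolding above_graph_def by auto
qed

lemma above_graph_nested:
  assumes F: "left_strict_chain F"
    and "poset_ideal I1" "mono_on I1 \<alpha>1" "poset_ideal I2" "mono_on I2 \<alpha>2"
  shows "above_graph F I1 \<alpha>1 \<subseteq> above_graph F I2 \<alpha>2 \<or> above_graph F I2 \<alpha>2 \<subseteq> above_graph F I1 \<alpha>1"
proof (rule ccontr)
  assume "\<not> ?thesis"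
  then obtain x y where x: "x \<in> above_graph F I1 \<alpha>1" "x \<notin> above_graph F I2 \<alpha>2"
    and y: "y \<in> above_graph F I2 \<alpha>2" "y \<notin> above_graph F I1 \<alpha>1"
    by blast
  have "x \<in> F" "y \<in> F"
    using x(1) y(1) unfolding above_graph_def by blast+
  then have "op_prod_le x y \<or> op_prod_le y x"
    using F unfolding left_strict_chain_def by blast
  then show False
    using above_graph_upward[OF x(1) \<open>y \<in> F\<close> _ assms(2,3)] above_graph_upward[OF y(1) \<open>x \<in> F\<close> _ assms(4,5)]
      x(2) y(2) by blast
qed

text \<open>Using \<alpha>1 only below the part of F above the graph of \<alpha>2 is what puts the merged graph
  inside both graphs on F.\<close>

locale marker_merge =
  fixes J :: "('p::{order,finite} \<Rightarrow> nat) set" and I1 I2 :: "'p set" and \<alpha>1 \<alpha>2 :: "'p \<Rightarrow> nat"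
    and F :: "('p \<times> nat) set"
  assumes hom_ideal: "hom_ideal J" and marker1: "marker J I1 \<alpha>1" and marker2: "marker J I2 \<alpha>2"
    and chain: "left_strict_chain F" and nested: "above_graph F I2 \<alpha>2 \<subseteq> above_graph F I1 \<alpha>1"
begin

definition lower :: "'p set" where
  "lower = {q. \<exists>x\<in>above_graph F I2 \<alpha>2. q \<le> fst x}"

definition merged_ideal :: "'p set" where
  "merged_ideal = (I1 \<inter> lower) \<union> I2"

definition merged_fun :: "'p \<Rightarrow> nat" where
  "merged_fun p = (if p \<in> lower \<and> p \<in> I1 \<and> p \<in> I2 then min (\<alpha>1 p) (\<alpha>2 p)
     else if p \<in> lower \<and> p \<in> I1 then \<alpha>1 p else \<alpha>2 p)"

lemma down_closed:
  shows "p \<le> q \<Longrightarrow> q \<in> I1 \<Longrightarrow> p \<in> I1" and "p \<le> q \<Longrightarrow> q \<in> I2 \<Longrightarrow> p \<in> I2"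
    and "p \<le> q \<Longrightarrow> q \<in> lower \<Longrightarrow> p \<in> lower"
proof -
  show "p \<le> q \<Longrightarrow> q \<in> I1 \<Longrightarrow> p \<in> I1"
    using marker1 unfolding marker_def poset_ideal_def by blast
  show "p \<le> q \<Longrightarrow> q \<in> I2 \<Longrightarrow> p \<in> I2"
    using marker2 unfolding marker_def poset_ideal_def by blast
  show "p \<le> q \<Longrightarrow> q \<in> lower \<Longrightarrow> p \<in> lower"
    unfolding lower_def by (blast intro: order_trans)
qed

lemma mono_markers:
  "p \<le> q \<Longrightarrow> q \<in> I1 \<Longrightarrow> \<alpha>1 p \<le> \<alpha>1 q" "p \<le> q \<Longrightarrow> q \<in> I2 \<Longrightarrow> \<alpha>2 p \<le> \<alpha>2 q"
  using marker1 marker2 down_closed(1,2) unfolding marker_def by (meson mono_onD)+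

lemma merged_fun_le:
  "p \<in> lower \<Longrightarrow> p \<in> I1 \<Longrightarrow> merged_fun p \<le> \<alpha>1 p" "p \<in> I2 \<Longrightarrow> merged_fun p \<le> \<alpha>2 p"
  unfolding merged_fun_def by auto

lemma merged_fun_cases:
  assumes "p \<in> merged_ideal"
  obtains "p \<in> lower" "p \<in> I1" "merged_fun p = \<alpha>1 p" | "p \<in> I2" "merged_fun p = \<alpha>2 p"
proof (cases "p \<in> lower \<and> p \<in> I1 \<and> (p \<notin> I2 \<or> \<alpha>1 p \<le> \<alpha>2 p)")
  case True
  then show ?thesis
    using that(1) by (auto simp: merged_fun_def)
next
  case False
  then show ?thesis
    using that(2) assms by (auto simp: merged_fun_def merged_ideal_def)
qed

lemma marker_merged: "marker J merged_ideal merged_fun"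
proof (rule marker_enlarge[OF hom_ideal marker2])
  show "poset_ideal merged_ideal"
    unfolding merged_ideal_def poset_ideal_def using down_closed by blast
  show "mono_on merged_ideal merged_fun"
  proof (rule mono_onI)
    fix p q assume "p \<in> merged_ideal" "q \<in> merged_ideal" "p \<le> q"
    from \<open>q \<in> merged_ideal\<close> show "merged_fun p \<le> merged_fun q"
    proof (cases rule: merged_fun_cases)
      case 1
      then have "merged_fun p \<le> \<alpha>1 p"
        using \<open>p \<le> q\<close> down_closed by (intro merged_fun_le) blast+
      also have "\<dots> \<le> \<alpha>1 q"
        using \<open>p \<le> q\<close> 1 by (intro mono_markers)
      finally show ?thesis
        using 1 by simp
    next
      case 2
      then have "merged_fun p \<le> \<alpha>2 p"
        using \<open>p \<le> q\<close> down_closed by (intro merged_fun_le) blast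
      also have "\<dots> \<le> \<alpha>2 q"
        using \<open>p \<le> q\<close> 2 by (intro mono_markers)
      finally show ?thesis
        using 2 by simp
    qed
  qed
qed (auto simp: merged_ideal_def intro: merged_fun_le)

lemma graph_merged_chain:
  assumes K: "left_strict_chain K"
  shows "graph merged_ideal merged_fun \<inter> K \<subseteq> graph I1 \<alpha>1 \<or>
    graph merged_ideal merged_fun \<inter> K \<subseteq> graph I2 \<alpha>2"
proof (rule ccontr)
  assume "\<not> ?thesis"
  then obtain p q where p: "p \<in> merged_ideal" "(p, merged_fun p) \<in> K" "(p, merged_fun p) \<notin> graph I2 \<alpha>2"
    and q: "q \<in> merged_ideal" "(q, merged_fun q) \<in> K" "(q, merged_fun q) \<notin> graph I1 \<alpha>1"
    unfolding graph_def by blast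
  from p(1) have p1: "p \<in> lower \<and> p \<in> I1 \<and> merged_fun p = \<alpha>1 p"
    by (cases rule: merged_fun_cases) (use p(3) in \<open>auto simp: graph_def\<close>)
  have p2: "\<alpha>1 p < \<alpha>2 p" if "p \<in> I2"
    using merged_fun_le(2)[OF that] p(3) p1 that by (auto simp: graph_def)
  from q(1) have q2: "q \<in> I2 \<and> merged_fun q = \<alpha>2 q"
    by (cases rule: merged_fun_cases) (use q(3) in \<open>auto simp: graph_def\<close>)
  have q1: "\<alpha>2 q < \<alpha>1 q" if "q \<in> lower" "q \<in> I1"
    using merged_fun_le(1)[OF that] q(3) q2 that by (auto simp: graph_def)
  have "op_prod_le (p, merged_fun p) (q, merged_fun q) \<or> op_prod_le (q, merged_fun q) (p, merged_fun p)"
    using K p(2) q(2) unfolding left_strict_chain_def by blast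
  then show False
  proof
    assume "op_prod_le (p, merged_fun p) (q, merged_fun q)"
    then have "q \<le> p" "merged_fun p \<le> merged_fun q"
      unfolding op_prod_le_def by simp_all
    moreover have "\<alpha>2 q < \<alpha>1 q"
      using q1 down_closed(1,3)[OF \<open>q \<le> p\<close>] p1 by blast
    ultimately show False
      using mono_markers(1) p1 q2 by fastforce
  next
    assume "op_prod_le (q, merged_fun q) (p, merged_fun p)"
    then have "p \<le> q" "merged_fun q \<le> merged_fun p"
      unfolding op_prod_le_def by simp_all
    moreover have "\<alpha>1 p < \<alpha>2 p"
      using p2 down_closed(2)[OF \<open>p \<le> q\<close>] q2 by blast
    ultimately show False
      using mono_markers(2) p1 q2 by fastforce
  qed
qed

lemma graph_merged_inter_chain:
  "graph merged_ideal merged_fun \<inter> F \<subseteq> graph I1 \<alpha>1 \<inter> graph I2 \<alpha>2"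
proof
  fix x assume "x \<in> graph merged_ideal merged_fun \<inter> F"
  then obtain p where x: "x = (p, merged_fun p)" "p \<in> merged_ideal" "x \<in> F"
    unfolding graph_def by blast
  have "p \<in> lower"
    using x(2)
  proof (cases rule: merged_fun_cases)
    case 2
    then have "x \<in> above_graph F I2 \<alpha>2"
      using x by (simp add: above_graph_def)
    then show ?thesis
      unfolding lower_def using x(1) by (auto intro!: bexI[of _ x])
  qed
  then obtain y where y: "y \<in> above_graph F I2 \<alpha>2" and "p \<le> fst y"
    unfolding lower_def by blast
  have "y \<in> F"
    using y unfolding above_graph_def by blast
  have "x \<in> above_graph F I2 \<alpha>2"
  proof -
    have "op_prod_le x y \<or> op_prod_le y x" "x \<noteq> y \<longrightarrow> fst x \<noteq> fst y"
      using chain x(3) \<open>y \<in> F\<close> unfolding left_strict_chain_def by blast+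
    moreover have "x = y" if "op_prod_le x y"
      using that \<open>p \<le> fst y\<close> x(1) calculation(2) by (auto simp: op_prod_le_def)
    ultimately show ?thesis
      using y x(3) above_graph_upward[of y F I2 \<alpha>2 x] marker2 unfolding marker_def by blast
  qed
  moreover have "x \<in> above_graph F I1 \<alpha>1"
    using calculation nested by blast
  ultimately have "p \<in> I1" "p \<in> I2" "\<alpha>1 p \<le> merged_fun p" "\<alpha>2 p \<le> merged_fun p"
    unfolding above_graph_def x(1) by simp_all
  moreover have "merged_fun p = min (\<alpha>1 p) (\<alpha>2 p)"
    using \<open>p \<in> lower\<close> calculation(1,2) by (simp add: merged_fun_def)
  ultimately show "x \<in> graph I1 \<alpha>1 \<inter> graph I2 \<alpha>2"
    unfolding x(1) graph_def by auto
qed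

end

definition merge_of ::
    "('p::order \<times> nat) set \<Rightarrow> ('p \<times> nat) set \<Rightarrow> ('p \<times> nat) set \<Rightarrow> ('p \<times> nat) set \<Rightarrow> bool" where
  "merge_of F G1 G2 G3 \<longleftrightarrow> G3 \<inter> F \<subseteq> G1 \<inter> G2 \<and>
     (\<forall>K. left_strict_chain K \<longrightarrow> G3 \<inter> K \<subseteq> G1 \<or> G3 \<inter> K \<subseteq> G2)"

lemma merge_of_subset: "merge_of F G1 G2 G3 \<Longrightarrow> H \<subseteq> G3 \<Longrightarrow> merge_of F G1 G2 H"
  unfolding merge_of_def by blast

lemma merge_of_commute: "merge_of F G1 G2 G3 \<Longrightarrow> merge_of F G2 G1 G3"
  unfolding merge_of_def by blast

lemma (in marker_merge) merge_of_merged: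
  "merge_of F (graph I1 \<alpha>1) (graph I2 \<alpha>2) (graph merged_ideal merged_fun)"
  unfolding merge_of_def using graph_merged_inter_chain graph_merged_chain by blast

lemma marker_graphs_merge:
  fixes J :: "('p::{order,finite} \<Rightarrow> nat) set"
  assumes J: "hom_ideal J" and "G1 \<in> marker_graphs J" "G2 \<in> marker_graphs J"
    and F: "left_strict_chain F"
  shows "\<exists>G3\<in>marker_graphs J. merge_of F G1 G2 G3"
proof -
  obtain I1 \<alpha>1 I2 \<alpha>2 where G: "G1 = graph I1 \<alpha>1" "G2 = graph I2 \<alpha>2"
    and m: "marker J I1 \<alpha>1" "marker J I2 \<alpha>2"
    using assms(2,3) unfolding marker_graphs_def by blast
  have "above_graph F I1 \<alpha>1 \<subseteq> above_graph F I2 \<alpha>2 \<or> above_graph F I2 \<alpha>2 \<subseteq> above_graph F I1 \<alpha>1"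
    using m by (intro above_graph_nested[OF F]) (auto simp: marker_def)
  then show ?thesis
  proof
    assume "above_graph F I2 \<alpha>2 \<subseteq> above_graph F I1 \<alpha>1"
    then interpret marker_merge J I1 I2 \<alpha>1 \<alpha>2 F
      using J m F by unfold_locales
    show ?thesis
    proof
      show "graph merged_ideal merged_fun \<in> marker_graphs J"
        using marker_merged unfolding marker_graphs_def by blast
    qed (use merge_of_merged G in simp)
  next
    assume "above_graph F I1 \<alpha>1 \<subseteq> above_graph F I2 \<alpha>2"
    then interpret marker_merge J I2 I1 \<alpha>2 \<alpha>1 F
      using J m F by unfold_locales
    show ?thesis
    proof
      show "graph merged_ideal merged_fun \<in> marker_graphs J"
        using marker_merged unfolding marker_graphs_def by blast
    qed (use merge_of_commute[OF merge_of_merged] G in simp)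
  qed
qed

lemma finite_marker_graph:
  "G \<in> marker_graphs (J :: ('p::{order,finite} \<Rightarrow> nat) set) \<Longrightarrow> finite G"
  unfolding marker_graphs_def graph_def by (auto simp: setcompr_eq_image)

lemma min_gen_graph_below:
  fixes J :: "('p::{order,finite} \<Rightarrow> nat) set"
  shows "G \<in> marker_graphs J \<Longrightarrow> \<exists>H\<in>min_gen_graphs J. H \<subseteq> G"
proof (induction "card G" arbitrary: G rule: less_induct)
  case less
  show ?case
  proof (cases "G \<in> min_gen_graphs J")
    case False
    then obtain H where H: "H \<in> marker_graphs J" "H \<subset> G"
      using less.prems unfolding min_gen_graphs_def by blast
    have "card H < card G"
      using H(2) finite_marker_graph[OF less.prems] by (simp add: psubset_card_mono)
    then obtain H' where "H' \<in> min_gen_graphs J" "H' \<subseteq> H"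
      using less.hyps H(1) by blast
    then show ?thesis
      using H(2) by blast
  qed blast
qed

lemma min_gen_graphs_merge:
  fixes J :: "('p::{order,finite} \<Rightarrow> nat) set"
  assumes "hom_ideal J" "G1 \<in> min_gen_graphs J" "G2 \<in> min_gen_graphs J" "left_strict_chain F"
  shows "\<exists>G3\<in>min_gen_graphs J. merge_of F G1 G2 G3"
proof -
  have "G1 \<in> marker_graphs J" "G2 \<in> marker_graphs J"
    using assms(2,3) unfolding min_gen_graphs_def by blast+
  then obtain G3 where "G3 \<in> marker_graphs J" "merge_of F G1 G2 G3"
    using marker_graphs_merge[OF assms(1) _ _ assms(4)] by blast
  moreover obtain H where "H \<in> min_gen_graphs J" "H \<subseteq> G3"
    using min_gen_graph_below[OF calculation(1)] by blast
  ultimately show ?thesis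
    using merge_of_subset by blast
qed

section \<open>The meet property of the renamed co-letterplace ideal\<close>

lemma lookup_graph_exponent:
  "finite G \<Longrightarrow> Poly_Mapping.lookup (graph_exponent \<rho> G) w = card {x \<in> G. \<rho> x = w}"
  by (simp add: graph_exponent_def lookup_sum lookup_single when_def sum.If_cases Int_def)

lemma lookup_graph_exponent_mono:
  "finite H \<Longrightarrow> finite G \<Longrightarrow> {x \<in> H. \<rho> x = w} \<subseteq> G \<Longrightarrow>
    Poly_Mapping.lookup (graph_exponent \<rho> H) w \<le> Poly_Mapping.lookup (graph_exponent \<rho> G) w"
  by (auto simp: lookup_graph_exponent intro!: card_mono)

lemma lookup_graph_exponent_merge:
  assumes "merge_of F G1 G2 G3" "finite G1" "finite G2" "finite G3" "G3 \<subseteq> S"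
    and fibres: "\<And>w. left_strict_chain {x \<in> S. \<rho> x = w}"
    and yz_in_F: "{x \<in> S. \<rho> x \<in> {y, z}} \<subseteq> F"
  shows "w \<in> {y, z} \<Longrightarrow>
      Poly_Mapping.lookup (graph_exponent \<rho> G3) w \<le> Poly_Mapping.lookup (graph_exponent \<rho> G1) w \<and>
      Poly_Mapping.lookup (graph_exponent \<rho> G3) w \<le> Poly_Mapping.lookup (graph_exponent \<rho> G2) w"
    and "Poly_Mapping.lookup (graph_exponent \<rho> G3) w \<le> Poly_Mapping.lookup (graph_exponent \<rho> G1) w \<or>
      Poly_Mapping.lookup (graph_exponent \<rho> G3) w \<le> Poly_Mapping.lookup (graph_exponent \<rho> G2) w"
proof -
  have "G3 \<inter> F \<subseteq> G1 \<inter> G2"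
    and chains: "\<And>K. left_strict_chain K \<Longrightarrow> G3 \<inter> K \<subseteq> G1 \<or> G3 \<inter> K \<subseteq> G2"
    using assms(1) unfolding merge_of_def by blast+
  show "Poly_Mapping.lookup (graph_exponent \<rho> G3) w \<le> Poly_Mapping.lookup (graph_exponent \<rho> G1) w \<and>
      Poly_Mapping.lookup (graph_exponent \<rho> G3) w \<le> Poly_Mapping.lookup (graph_exponent \<rho> G2) w"
    if "w \<in> {y, z}"
  proof -
    have "{x \<in> G3. \<rho> x = w} \<subseteq> G3 \<inter> F"
      using that \<open>G3 \<subseteq> S\<close> yz_in_F by blast
    then show ?thesis
      using \<open>G3 \<inter> F \<subseteq> G1 \<inter> G2\<close> assms(2-4) by (intro conjI lookup_graph_exponent_mono) blast+
  qed
  have "{x \<in> G3. \<rho> x = w} \<subseteq> G1 \<or> {x \<in> G3. \<rho> x = w} \<subseteq> G2"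
    using chains[OF fibres[of w]] \<open>G3 \<subseteq> S\<close> by blast
  then show "Poly_Mapping.lookup (graph_exponent \<rho> G3) w \<le> Poly_Mapping.lookup (graph_exponent \<rho> G1) w \<or>
      Poly_Mapping.lookup (graph_exponent \<rho> G3) w \<le> Poly_Mapping.lookup (graph_exponent \<rho> G2) w"
    using lookup_graph_exponent_mono[OF assms(4) assms(2)] lookup_graph_exponent_mono[OF assms(4) assms(3)]
    by blast
qed

text \<open>The meet of two renamed generators is witnessed by the renamed generator of a merged
  marker graph.\<close>

lemma multiples_graph_exponent_meet_closed:
  fixes J :: "('p::{order,finite} \<Rightarrow> nat) set"
  assumes J: "hom_ideal J" and "Supp J \<subseteq> S"
    and fibres: "\<And>w. left_strict_chain {x \<in> S. \<rho> x = w}"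
    and F: "left_strict_chain F" and yz_in_F: "{x \<in> S. \<rho> x \<in> {y, z}} \<subseteq> F"
  shows "meet_closed y z (multiples (graph_exponent \<rho> ` min_gen_graphs J))"
  unfolding meet_closed_def
proof (intro ballI allI impI, elim conjE)
  fix n1 n2 n
  assume n1: "n1 \<in> multiples (graph_exponent \<rho> ` min_gen_graphs J)"
    and n2: "n2 \<in> multiples (graph_exponent \<rho> ` min_gen_graphs J)"
    and agree: "agree_outside {y, z} n1 n2"
    and n: "\<forall>v. min (Poly_Mapping.lookup n1 v) (Poly_Mapping.lookup n2 v) \<le> Poly_Mapping.lookup n v"
  obtain G1 where G1: "G1 \<in> min_gen_graphs J"
    "\<And>w. Poly_Mapping.lookup (graph_exponent \<rho> G1) w \<le> Poly_Mapping.lookup n1 w"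
    using n1 unfolding multiples_def by blast
  obtain G2 where G2: "G2 \<in> min_gen_graphs J"
    "\<And>w. Poly_Mapping.lookup (graph_exponent \<rho> G2) w \<le> Poly_Mapping.lookup n2 w"
    using n2 unfolding multiples_def by blast
  obtain G3 where G3: "G3 \<in> min_gen_graphs J" "merge_of F G1 G2 G3"
    using min_gen_graphs_merge[OF J G1(1) G2(1) F] by blast
  have fin: "finite G1" "finite G2" "finite G3"
    using G1(1) G2(1) G3(1) finite_marker_graph unfolding min_gen_graphs_def by blast+
  have "G3 \<subseteq> S"
    using G3(1) \<open>Supp J \<subseteq> S\<close> unfolding Supp_def by blast
  note merge = lookup_graph_exponent_merge[OF G3(2) fin \<open>G3 \<subseteq> S\<close> fibres yz_in_F]
  have "Poly_Mapping.lookup (graph_exponent \<rho> G3) w \<le> Poly_Mapping.lookup n w" for w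
  proof (cases "w \<in> {y, z}")
    case True
    then show ?thesis
      using merge(1)[OF True] G1(2)[of w] G2(2)[of w] n[rule_format, of w]
      by (auto simp: min_def split: if_splits)
  next
    case False
    then have "Poly_Mapping.lookup n1 w = Poly_Mapping.lookup n2 w"
      using agree unfolding agree_outside_def by blast
    then show ?thesis
      using merge(2)[of w] G1(2)[of w] G2(2)[of w] n[rule_format, of w] by auto
  qed
  then show "n \<in> multiples (graph_exponent \<rho> ` min_gen_graphs J)"
    unfolding multiples_def using G3(1) by blast
qed

section \<open>The regular sequence\<close>

lemma module_cscale: "module (cscale :: 'k::field \<Rightarrow> ('p, 'k) lpoly \<Rightarrow> ('p, 'k) lpoly)"
proof
  fix a b :: 'k and x y :: "('p, 'k) lpoly"
  show "cscale a (x + y) = cscale a x + cscale a y"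
    unfolding cscale_def by (rule distrib_left)
  show "cscale (a + b) x = cscale a x + cscale b x"
    unfolding cscale_def single_add by (rule distrib_right)
  show "cscale a (cscale b x) = cscale (a * b) x"
    unfolding cscale_def by (simp add: mult.assoc[symmetric] mult_single)
  show "cscale 1 x = x"
    unfolding cscale_def by simp
qed

lemma span_subset_ideal_in:
  "module.span cscale E \<subseteq> ideal_in (polyring S) (E :: ('p, 'k::field) lpoly set)"
proof (rule module.span_minimal[OF module_cscale])
  show "E \<subseteq> ideal_in (polyring S) E"
    using ideal_in_generator by blast
  show "module.subspace cscale (ideal_in (polyring S) E)"
    unfolding module.subspace_def[OF module_cscale] cscale_def
    by (simp add: ideal_in_zero ideal_in_add ideal_in_mult polyring_single)
qed

lemma lookup_var: "Poly_Mapping.lookup (var u :: ('p, 'k::field) lpoly) (Poly_Mapping.single w 1) =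
    (if u = w then 1 else 0)"
  unfolding var_def by (metis lookup_single_eq lookup_single_not_eq zero_neq_one)

lemma var_diff_eq_var_diff:
  assumes "(var u - var v :: ('p, 'k::field) lpoly) = var s - var t" and "u \<noteq> v"
  shows "u \<in> {s, t}" and "v \<in> {s, t}"
proof -
  have "Poly_Mapping.lookup (var s - var t :: ('p, 'k) lpoly) (Poly_Mapping.single u 1) = 1"
    and "Poly_Mapping.lookup (var s - var t :: ('p, 'k) lpoly) (Poly_Mapping.single v 1) = - 1"
    unfolding assms(1)[symmetric] lookup_minus lookup_var using assms(2) by simp_all
  then show "u \<in> {s, t}" and "v \<in> {s, t}"
    unfolding lookup_minus lookup_var by (auto split: if_splits)
qed

lemma lookup_var_zero: "Poly_Mapping.lookup (var u :: ('p, 'k::field) lpoly) 0 = 0"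
  unfolding var_def by (metis lookup_single_eq lookup_single_not_eq lookup_zero zero_neq_one)

lemma lookup_sqmon_zero:
  assumes "finite G" "G \<noteq> {}"
  shows "Poly_Mapping.lookup (sqmon G :: ('p, 'k::field) lpoly) 0 = 0"
proof -
  obtain t where "t \<in> G"
    using assms(2) by blast
  then have "Poly_Mapping.lookup (\<Sum>t\<in>G. Poly_Mapping.single t (1::nat)) t = 1"
    using assms(1) by (simp add: lookup_sum lookup_single when_def)
  then have "(\<Sum>t\<in>G. Poly_Mapping.single t (1::nat)) \<noteq> 0"
    by auto
  then show ?thesis
    unfolding sqmon_def by (simp add: lookup_single_not_eq)
qed

locale kernel_basis =
  fixes J :: "('p::{order,finite} \<Rightarrow> nat) set" and S :: "('p \<times> nat) set"
    and \<phi> :: "'p \<times> nat \<Rightarrow> 'r" and B :: "('p, 'k::field) lpoly set"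
  assumes hom_ideal: "hom_ideal J" and Supp: "Supp J \<subseteq> S"
    and fibres: "left_strict_chain_fibers S \<phi>"
    and B_diff: "\<forall>b\<in>B. \<exists>s\<in>S. \<exists>t\<in>S. \<phi> s = \<phi> t \<and> b = var s - var t"
    and independent: "module.independent cscale B"
begin

definition edge_equiv :: "('p, 'k) lpoly set \<Rightarrow> 'p \<times> nat \<Rightarrow> 'p \<times> nat \<Rightarrow> bool" where
  "edge_equiv E = equivclp (\<lambda>u v. u \<in> S \<and> v \<in> S \<and> var u - var v \<in> E)"

definition rep :: "('p, 'k) lpoly set \<Rightarrow> 'p \<times> nat \<Rightarrow> 'p \<times> nat" where
  "rep E u = (SOME w. edge_equiv E u w)"

lemma edge_equiv_rep: "edge_equiv E u (rep E u)"
  unfolding rep_def by (rule someI[of _ u]) (simp add: edge_equiv_def)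

lemma rep_eq_iff: "rep E u = rep E v \<longleftrightarrow> edge_equiv E u v"
proof
  have sym: "edge_equiv E x y \<Longrightarrow> edge_equiv E y x"
    and trans: "edge_equiv E x y \<Longrightarrow> edge_equiv E y z \<Longrightarrow> edge_equiv E x z" for x y z
    unfolding edge_equiv_def by (auto intro: equivclp_sym equivclp_trans)
  show "edge_equiv E u v" if "rep E u = rep E v"
    using that edge_equiv_rep[of E u] sym[OF edge_equiv_rep[of E v]] by (auto intro: trans)
  show "rep E u = rep E v" if "edge_equiv E u v"
  proof -
    have "edge_equiv E u = edge_equiv E v"
      using that sym trans by blast
    then show ?thesis
      unfolding rep_def by simp
  qed
qed

lemma rep_into: "u \<in> S \<Longrightarrow> rep E u \<in> S"
  using edge_equiv_rep[of E u] unfolding edge_equiv_def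
  by (induction rule: equivclp_induct) auto

lemma var_diff_rep_span: "var u - var (rep E u) \<in> module.span cscale E"
  using edge_equiv_rep[of E u] unfolding edge_equiv_def
proof (induction rule: equivclp_induct)
  case base
  then show ?case by (simp add: module.span_zero[OF module_cscale])
next
  case (step y z)
  have "var y - var z \<in> module.span cscale E"
  proof (cases "var y - var z \<in> E")
    case False
    then have "var z - var y \<in> E"
      using step(2) by blast
    then show ?thesis
      using module.span_neg[OF module_cscale module.span_base[OF module_cscale]] by fastforce
  qed (rule module.span_base[OF module_cscale])
  then have "(var u - var y) + (var y - var z) \<in> module.span cscale E"
    using step(3) by (rule module.span_add[OF module_cscale, rotated])
  then show ?case
    by simp
qed

lemma var_diff_rep_ideal: "var u - var (rep E u) \<in> ideal_in (polyring S) E"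
  using span_subset_ideal_in var_diff_rep_span by blast

lemma fibre_var_diff: "var u - var v \<in> B \<Longrightarrow> \<phi> u = \<phi> v"
proof (cases "u = v")
  case False
  assume "var u - var v \<in> B"
  then obtain s t where "\<phi> s = \<phi> t" and eq: "var u - var v = (var s - var t :: ('p, 'k) lpoly)"
    using B_diff by blast
  then show ?thesis
    using var_diff_eq_var_diff[OF eq False] by auto
qed simp

context
  fixes E assumes E: "E \<subseteq> B"
begin

lemma edge_equiv_fibre: "edge_equiv E u v \<Longrightarrow> \<phi> u = \<phi> v"
  unfolding edge_equiv_def
proof (induction rule: equivclp_induct)
  case (step y z)
  then have "var y - var z \<in> B \<or> var z - var y \<in> B"
    using E by blast
  then have "\<phi> y = \<phi> z"
    by (metis fibre_var_diff)
  then show ?case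
    using step.IH by simp
qed simp

lemma rep_fibres_left_strict_chain: "left_strict_chain {x \<in> S. rep E x = w}"
  unfolding left_strict_chain_def
proof (intro ballI)
  fix x x' assume x: "x \<in> {x \<in> S. rep E x = w}" and x': "x' \<in> {x \<in> S. rep E x = w}"
  then have "edge_equiv E x' x"
    by (simp flip: rep_eq_iff)
  then have "x \<in> {s \<in> S. \<phi> s = \<phi> x}" "x' \<in> {s \<in> S. \<phi> s = \<phi> x}"
    using x x' edge_equiv_fibre by auto
  moreover have "left_strict_chain {s \<in> S. \<phi> s = \<phi> x}"
    using fibres unfolding left_strict_chain_fibers_iff by blast
  ultimately show "(op_prod_le x x' \<or> op_prod_le x' x) \<and> (x \<noteq> x' \<longrightarrow> fst x \<noteq> fst x')"
    unfolding left_strict_chain_def by blast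
qed

lemma diff_rename_rep:
  "f \<in> polyring S \<Longrightarrow> f - rename_vars (rep E) f \<in> ideal_in (polyring S) E"
  by (rule diff_rename_vars[OF rep_into var_diff_rep_ideal])

lemma rename_rep_vanishes:
  assumes "b \<in> E"
  shows "rename_vars (rep E) b = 0"
proof -
  obtain s t where "s \<in> S" "t \<in> S" and b: "b = var s - var t"
    using assms E B_diff by blast
  then have "rep E s = rep E t"
    using assms unfolding rep_eq_iff edge_equiv_def by blast
  then show ?thesis
    by (simp add: b rename_vars_diff rename_vars_var)
qed

abbreviation renamed_ideal :: "('p, 'k) lpoly set" where
  "renamed_ideal \<equiv> monomial_ideal S (graph_exponent (rep E) ` min_gen_graphs J)"

lemma rename_rep_coletterplace:
  assumes "f \<in> ideal_in (polyring S) (coletterplace S J \<union> E)"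
  shows "rename_vars (rep E) f \<in> renamed_ideal"
proof (rule rename_vars_ideal_in[OF rep_into _ assms])
  fix y assume "y \<in> coletterplace S J \<union> E"
  then show "rename_vars (rep E) y \<in> renamed_ideal"
  proof
    assume y: "y \<in> coletterplace S J"
    show ?thesis
      by (rule rename_vars_ideal_in[OF rep_into _ y[unfolded coletterplace_def]])
        (auto simp: rename_vars_sqmon intro: ideal_in_generator)
  qed (simp add: rename_rep_vanishes ideal_in_zero)
qed

lemma renamed_ideal_subset: "renamed_ideal \<subseteq> ideal_in (polyring S) (coletterplace S J \<union> E)"
proof (rule ideal_in_subset_ideal_in, safe)
  fix G assume "G \<in> min_gen_graphs J"
  then have "G \<subseteq> S"
    using Supp unfolding Supp_def by blast
  have "sqmon G \<in> ideal_in (polyring S) (coletterplace S J \<union> E)"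
    using \<open>G \<in> min_gen_graphs J\<close> unfolding coletterplace_def
    by (blast intro: ideal_in_generator)
  moreover have "sqmon G - rename_vars (rep E) (sqmon G) \<in> ideal_in (polyring S) (coletterplace S J \<union> E)"
    using diff_rename_rep[OF polyring_sqmon[OF \<open>G \<subseteq> S\<close>]] ideal_in_mono[of E] by blast
  ultimately have "sqmon G - (sqmon G - rename_vars (rep E) (sqmon G)) \<in>
      ideal_in (polyring S) (coletterplace S J \<union> E)"
    by (rule ideal_in_diff)
  then show "Poly_Mapping.single (graph_exponent (rep E) G) 1 \<in>
      ideal_in (polyring S) (coletterplace S J \<union> E)"
    by (simp add: rename_vars_sqmon)
qed

lemma nonzerodivisor:
  assumes "b \<in> B" "b \<notin> E" "g \<in> polyring S"
    and "b * g \<in> ideal_in (polyring S) (coletterplace S J \<union> E)"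
  shows "g \<in> ideal_in (polyring S) (coletterplace S J \<union> E)"
proof -
  obtain s t where st: "s \<in> S" "t \<in> S" "\<phi> s = \<phi> t" "b = var s - var t"
    using B_diff assms(1) by blast
  have neq: "rep E s \<noteq> rep E t"
  proof
    assume "rep E s = rep E t"
    have "(var s - var (rep E s)) - (var t - var (rep E t)) \<in> module.span cscale E"
      by (intro module.span_diff[OF module_cscale] var_diff_rep_span)
    then have "b \<in> module.span cscale E"
      using \<open>rep E s = rep E t\<close> by (simp add: st(4))
    also have "\<dots> \<subseteq> module.span cscale (B - {b})"
      using E assms(2) by (intro module.span_mono[OF module_cscale]) blast
    finally have "module.dependent cscale B"
      using assms(1) vector_space.dependent_def[OF module_cscale[unfolded module_iff_vector_space]]
      by blast
    then show False
      using independent by blast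
  qed
  have meet: "meet_closed (rep E s) (rep E t) (multiples (graph_exponent (rep E) ` min_gen_graphs J))"
  proof (rule multiples_graph_exponent_meet_closed[OF hom_ideal Supp rep_fibres_left_strict_chain])
    show "left_strict_chain {x \<in> S. \<phi> x = \<phi> s}"
      using fibres by (simp add: left_strict_chain_fibers_iff)
    show "{x \<in> S. rep E x \<in> {rep E s, rep E t}} \<subseteq> {x \<in> S. \<phi> x = \<phi> s}"
      using st(3) by (auto simp: rep_eq_iff dest: edge_equiv_fibre)
  qed
  have prod: "(var (rep E s) - var (rep E t)) * rename_vars (rep E) g \<in> renamed_ideal"
    using rename_rep_coletterplace[OF assms(4)]
    by (simp add: st(4) rename_vars_mult rename_vars_diff rename_vars_var)
  have "rename_vars (rep E) g \<in> renamed_ideal"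
    by (rule monomial_ideal_nonzerodivisor[OF neq rep_into[OF st(1)] rep_into[OF st(2)] meet
          polyring_rename_vars[OF rep_into assms(3)] prod])
  then have "rename_vars (rep E) g \<in> ideal_in (polyring S) (coletterplace S J \<union> E)"
    using renamed_ideal_subset by blast
  moreover have "g - rename_vars (rep E) g \<in> ideal_in (polyring S) (coletterplace S J \<union> E)"
    using diff_rename_rep[OF assms(3)] ideal_in_mono[of E] by blast
  ultimately have "rename_vars (rep E) g + (g - rename_vars (rep E) g) \<in>
      ideal_in (polyring S) (coletterplace S J \<union> E)"
    by (rule ideal_in_add)
  then show ?thesis
    by simp
qed

end

lemma one_notin_ideal_in_with_basis:
  assumes "1 \<notin> ideal_in (polyring S) (coletterplace S J)"
  shows "1 \<notin> ideal_in (polyring S) (coletterplace S J \<union> B)"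
proof
  assume one: "1 \<in> ideal_in (polyring S) (coletterplace S J \<union> B)"
  have nonempty: "G \<noteq> {}" if "G \<in> min_gen_graphs J" for G
  proof
    assume "G = {}"
    then have "1 \<in> coletterplace S J"
      using that unfolding coletterplace_def
      by (metis ideal_in_generator image_eqI sqmon_def single_one sum.empty)
    then show False
      using assms ideal_in_generator by blast
  qed
  have "Poly_Mapping.lookup f 0 = 0" if "f \<in> coletterplace S J \<union> B" for f
    using that
  proof
    assume "f \<in> coletterplace S J"
    then show ?thesis
      unfolding coletterplace_def
    proof (rule ideal_in_constant_term[rotated], safe)
      fix G assume "G \<in> min_gen_graphs J"
      then show "Poly_Mapping.lookup (sqmon G :: ('p, 'k) lpoly) 0 = 0"
        using nonempty finite_marker_graph unfolding min_gen_graphs_def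
        by (intro lookup_sqmon_zero) auto
    qed
  next
    assume "f \<in> B"
    then show ?thesis
      using B_diff by (auto simp: lookup_minus lookup_var_zero)
  qed
  then have "Poly_Mapping.lookup (1 :: ('p, 'k) lpoly) 0 = 0"
    using one by (rule ideal_in_constant_term)
  then show False
    by simp
qed

end

lemma nth_notin_set_take: "distinct xs \<Longrightarrow> i < length xs \<Longrightarrow> xs ! i \<notin> set (take i xs)"
  by (metis set_take_disj_set_drop_if_distinct Cons_nth_drop_Suc disjoint_iff list.set_intros(1) order_refl)

theorem theorem2p2:
  fixes J :: "('p::{order,finite} \<Rightarrow> nat) set"
    and S :: "('p \<times> nat) set"
    and \<phi> :: "'p \<times> nat \<Rightarrow> 'r::order"
    and B :: "('p, 'k::field) lpoly set"
  assumes "hom_ideal J"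
    and "finite S" and "Supp J \<subseteq> S"
    and "\<forall>s\<in>S. \<forall>t\<in>S. prod_le s t \<longrightarrow> \<phi> s \<le> \<phi> t"
    and "left_strict_chain_fibers S \<phi>"
    and "\<forall>b\<in>B. \<exists>s\<in>S. \<exists>t\<in>S. \<phi> s = \<phi> t \<and> b = var s - var t"
    and "Modules.module.independent cscale B"
    and "Modules.module.span cscale B = lin_kernel S \<phi>"
  shows "\<forall>bs. distinct bs \<and> set bs = B \<longrightarrow> regular_seq S (coletterplace S J) bs"
proof (intro allI impI)
  interpret kernel_basis J S \<phi> B
    using assms(1,3,5-7) by unfold_locales
  fix bs assume bs: "distinct bs \<and> set bs = B"
  show "regular_seq S (coletterplace S J) bs"
    unfolding regular_seq_def
  proof (intro conjI allI impI ballI)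
    fix i g assume "i < length bs" and "g \<in> polyring S"
      and "bs ! i * g \<in> ideal_in (polyring S) (coletterplace S J \<union> set (take i bs))"
    moreover have "set (take i bs) \<subseteq> B" "bs ! i \<in> B" "bs ! i \<notin> set (take i bs)"
      using bs \<open>i < length bs\<close> set_take_subset[of i bs] by (auto simp: nth_notin_set_take)
    ultimately show "g \<in> ideal_in (polyring S) (coletterplace S J \<union> set (take i bs))"
      using nonzerodivisor by blast
  qed (use bs one_notin_ideal_in_with_basis in auto)
qed

end
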